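(* Let $X$ be a complex K3 surface, let $K_{\mathrm{num}}(X)$ be its numerical Grothendieck group equipped with the Mukai pairing $(\,,\,)$, and let $s=v(\mathcal{E})$ be the Mukai vector of a spherical object $\mathcal{E}\in D^b(X)$. Let $s^\perp_+\subset K_{\mathrm{num}}(X)\otimes\mathbb{R}$ be the set of classes $v$ with $(v,s)=0$ and $v^2>0$. Then, up to rescaling, the set of integral classes $v\in s^\perp_+$ such that $2v^2$ is not a square is dense in $s^\perp_+$; that is, the set of positive real multiples of such integral classes is dense in $s^\perp_+$.
   Context: $K_{\mathrm{num}}(X)$ is identified with the algebraic Mukai lattice $H^0(X,\mathbb{Z})\oplus\mathrm{NS}(X)\oplus H^4(X,\mathbb{Z})$ via the Mukai vector $v(E)=\mathrm{ch}(E)\sqrt{\mathrm{td}(X)}$, with pairing $((r_1,c_1,m_1),(r_2,c_2,m_2))=c_1c_2-r_1m_2-r_2m_1$; it has signature $(2,\rho)$ where $\rho$ is the Picard rank. A spherical object satisfies $\mathbf{R}\mathrm{Hom}(\mathcal{E},\mathcal{E})\cong\mathbb{C}\oplus\mathbb{C}[-2]$; $v^2$ means $(v,v)$; "square" means square of an integer. *)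

theory Defs
  imports "HOL-Analysis.Analysis"
begin

text \<open>Abstract model of the algebraic Mukai lattice
  K_num(X) = H^0 + NS(X) + H^4.  NS(X) is Z^rho with an integral symmetric
  Gram matrix Q (index type 'n, CARD('n) = rho).  Real Mukai vectors are
  triples (r, c, m) :: real * real^'n * real.\<close>

definition ns_form :: "int^'n^'n \<Rightarrow> real^'n \<Rightarrow> real^'n \<Rightarrow> real" where
  "ns_form Q c d = (\<Sum>i\<in>UNIV. \<Sum>j\<in>UNIV. c$i * real_of_int (Q$i$j) * d$j)"

definition mukai_pair ::
  "int^'n^'n \<Rightarrow> real \<times> (real^'n) \<times> real \<Rightarrow> real \<times> (real^'n) \<times> real \<Rightarrow> real" where
  "mukai_pair Q v w =
     ns_form Q (fst (snd v)) (fst (snd w))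
       - fst v * snd (snd w) - fst w * snd (snd v)"

definition integral_class :: "real \<times> (real^'n) \<times> real \<Rightarrow> bool" where
  "integral_class v =
     (fst v \<in> \<int> \<and> (\<forall>i. fst (snd v) $ i \<in> \<int>) \<and> snd (snd v) \<in> \<int>)"

text \<open>Q is the Gram matrix of an even lattice of signature (1, rho-1)
  (as the Neron-Severi lattice of a K3 surface is; rho \<le> 20).\<close>
definition hyperbolic_even_lattice :: "int^'n^'n \<Rightarrow> bool" where
  "hyperbolic_even_lattice Q \<longleftrightarrow>
     transpose Q = Q \<and> (\<forall>i. even (Q$i$i)) \<and>
     (\<exists>(P::real^'n^'n) i0. invertible P \<and>
        transpose P ** (\<chi> i j. real_of_int (Q$i$j)) ** P =
        (\<chi> i j. if i = j then (if i = i0 then 1 else -1) else 0))"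

definition s_perp_plus ::
  "int^'n^'n \<Rightarrow> real \<times> (real^'n) \<times> real \<Rightarrow> (real \<times> (real^'n) \<times> real) set" where
  "s_perp_plus Q s = {v. mukai_pair Q v s = 0 \<and> mukai_pair Q v v > 0}"

end

theory Submission
  imports Defs
begin

text \<open>Projecting a rational approximation of v in s-perp along s (which keeps it rational,
  as s^2 = -2) shows that rays through integral classes are dense in s-perp-plus. It remains
  to perturb an integral w in s-perp-plus for which 2 w^2 = k^2 is a square. There is an
  integral u in s-perp with w^2 u^2 \<noteq> (w,u)^2: otherwise, by density and continuity, the
  orthogonal complement of s and w would be totally isotropic, impossible for a nondegenerate
  pairing on a space of dimension at least 3. Now
    4 w^2 (M w + u)^2 = (2 w^2 M + 2 (w,u))^2 + 4 (w^2 u^2 - (w,u)^2),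
  and multiplying by 2 w^2 = k^2 shows that if 2 (M w + u)^2 were a square, two large squares
  would differ by a fixed nonzero integer. So for large M it is not a square, while the rays
  through M w + u converge to the ray through w.\<close>

lemma ns_form_add_left: "ns_form Q (c + c') d = ns_form Q c d + ns_form Q c' d"
  by (simp add: ns_form_def distrib_right sum.distrib)

lemma ns_form_add_right: "ns_form Q c (d + d') = ns_form Q c d + ns_form Q c d'"
  by (simp add: ns_form_def distrib_left sum.distrib)

lemma ns_form_scaleR_left: "ns_form Q (a *\<^sub>R c) d = a * ns_form Q c d"
  by (simp add: ns_form_def sum_distrib_left mult.assoc)

lemma ns_form_scaleR_right: "ns_form Q c (a *\<^sub>R d) = a * ns_form Q c d"
  by (simp add: ns_form_def sum_distrib_left algebra_simps)

lemma ns_form_commute: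
  assumes "transpose Q = Q"
  shows "ns_form Q c d = ns_form Q d c"
proof -
  have "Q$j$i = Q$i$j" for i j
    using arg_cong[OF assms, of "\<lambda>A. A$i$j"] by (simp add: transpose_def)
  then show ?thesis
    unfolding ns_form_def by (subst sum.swap) (simp add: ac_simps)
qed

lemma ns_form_eq_inner: "ns_form Q c d = c \<bullet> ((\<chi> i j. real_of_int (Q$i$j)) *v d)"
  by (simp add: ns_form_def inner_vec_def matrix_vector_mult_def sum_distrib_left mult.assoc)

lemma mukai_pair_add_left: "mukai_pair Q (x + y) z = mukai_pair Q x z + mukai_pair Q y z"
  by (simp add: mukai_pair_def ns_form_add_left algebra_simps)

lemma mukai_pair_add_right: "mukai_pair Q z (x + y) = mukai_pair Q z x + mukai_pair Q z y"
  by (simp add: mukai_pair_def ns_form_add_right algebra_simps)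

lemma mukai_pair_scaleR_left: "mukai_pair Q (a *\<^sub>R x) z = a * mukai_pair Q x z"
  by (simp add: mukai_pair_def ns_form_scaleR_left algebra_simps)

lemma mukai_pair_scaleR_right: "mukai_pair Q z (a *\<^sub>R x) = a * mukai_pair Q z x"
  by (simp add: mukai_pair_def ns_form_scaleR_right algebra_simps)

lemma mukai_pair_diff_left: "mukai_pair Q (x - y) z = mukai_pair Q x z - mukai_pair Q y z"
  using mukai_pair_add_left[of Q "x - y" y z] by simp

lemma mukai_pair_diff_right: "mukai_pair Q z (x - y) = mukai_pair Q z x - mukai_pair Q z y"
  using mukai_pair_add_right[of Q z "x - y" y] by simp

lemmas mukai_pair_bilinear =
  mukai_pair_add_left mukai_pair_add_right mukai_pair_scaleR_left mukai_pair_scaleR_right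
  mukai_pair_diff_left mukai_pair_diff_right

lemma mukai_pair_commute: "transpose Q = Q \<Longrightarrow> mukai_pair Q x y = mukai_pair Q y x"
  by (simp add: mukai_pair_def ns_form_commute algebra_simps)

lemma hyperbolic_even_lattice_symmetric: "hyperbolic_even_lattice Q \<Longrightarrow> transpose Q = Q"
  by (simp add: hyperbolic_even_lattice_def)

lemma tendsto_mukai_pair [tendsto_intros]:
  assumes "(f \<longlongrightarrow> a) F" "(g \<longlongrightarrow> b) F"
  shows "((\<lambda>n. mukai_pair Q (f n) (g n)) \<longlongrightarrow> mukai_pair Q a b) F"
  unfolding mukai_pair_def ns_form_def by (intro tendsto_intros assms)

lemma integral_class_add: "integral_class x \<Longrightarrow> integral_class y \<Longrightarrow> integral_class (x + y)"
  unfolding integral_class_def by auto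

lemma integral_class_scaleR: "a \<in> \<int> \<Longrightarrow> integral_class x \<Longrightarrow> integral_class (a *\<^sub>R x)"
  unfolding integral_class_def by auto

lemma mukai_pair_in_Ints: "integral_class x \<Longrightarrow> integral_class y \<Longrightarrow> mukai_pair Q x y \<in> \<int>"
  unfolding mukai_pair_def ns_form_def integral_class_def
  by (intro Ints_diff Ints_sum Ints_mult Ints_of_int) auto

lemma ns_form_nondegenerate:
  fixes Q :: "int^'n^'n"
  assumes "hyperbolic_even_lattice Q" and "\<And>d. ns_form Q c d = 0"
  shows "c = 0"
proof -
  define Qr where "Qr = (\<chi> i j. real_of_int (Q$i$j))"
  obtain P :: "real^'n^'n" and i0 where "invertible P"
    and diag: "transpose P ** Qr ** P = (\<chi> i j. if i = j then (if i = i0 then 1 else -1) else 0)"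
    using assms(1) unfolding hyperbolic_even_lattice_def Qr_def by blast
  define D :: "real^'n^'n" where "D = (\<chi> i j. if i = j then (if i = i0 then 1 else -1) else 0)"
  obtain P' where P': "P ** P' = mat 1"
    using \<open>invertible P\<close> unfolding invertible_def by blast
  define z where "z = P' *v c"
  have c_eq: "P *v z = c"
    unfolding z_def by (simp add: matrix_vector_mul_assoc P')
  have D_apply: "(D *v y)$i = (if i = i0 then 1 else -1) * y$i" for y i
  proof -
    have "(D *v y)$i = (\<Sum>j\<in>UNIV. if i = j then (if i = i0 then 1 else -1) * y$j else 0)"
      unfolding D_def matrix_vector_mult_def vec_lambda_beta by (rule sum.cong) auto
    then show ?thesis by (simp add: sum.delta)
  qed
  have D_involution: "D *v (D *v y) = y" for y
    by (simp add: vec_eq_iff D_apply)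
  \<comment> \<open>test c against P D z: in the diagonalising basis this is the Euclidean square of z\<close>
  have "c \<bullet> (Qr *v (P *v (D *v z))) = 0"
    using assms(2)[of "P *v (D *v z)"] by (simp add: ns_form_eq_inner Qr_def)
  then have "z \<bullet> (transpose P *v (Qr *v (P *v (D *v z)))) = 0"
    by (metis c_eq dot_lmul_matrix vector_transpose_matrix)
  then have "z \<bullet> ((transpose P ** Qr ** P) *v (D *v z)) = 0"
    by (simp add: matrix_vector_mul_assoc matrix_mul_assoc)
  then have "z \<bullet> z = 0"
    using diag D_involution by (simp add: D_def)
  then show "c = 0"
    using c_eq by simp
qed

lemma mukai_pair_nondegenerate:
  assumes "hyperbolic_even_lattice Q" and "\<And>y. mukai_pair Q x y = 0"
  shows "x = 0"
proof -
  obtain r c m where x: "x = (r, c, m)"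
    by (cases x) auto
  have "r = 0"
    using assms(2)[of "(0, 0, 1)"] by (simp add: x mukai_pair_def ns_form_def)
  moreover have "m = 0"
    using assms(2)[of "(1, 0, 0)"] by (simp add: x mukai_pair_def ns_form_def)
  moreover have "c = 0"
  proof (rule ns_form_nondegenerate[OF assms(1)])
    fix d
    show "ns_form Q c d = 0"
      using assms(2)[of "(0, d, 0)"] by (simp add: x mukai_pair_def)
  qed
  ultimately show ?thesis
    by (simp add: x zero_prod_def)
qed

lemma tendsto_floor_mult_divide:
  "(\<lambda>N. of_int \<lfloor>real (Suc N) * t\<rfloor> / real (Suc N)) \<longlonglongrightarrow> t"
proof -
  have "(\<lambda>N. of_int \<lfloor>real (Suc N) * t\<rfloor> / real (Suc N) - t) \<longlonglongrightarrow> 0"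
  proof (rule Lim_null_comparison)
    show "\<forall>\<^sub>F N in sequentially.
        norm (of_int \<lfloor>real (Suc N) * t\<rfloor> / real (Suc N) - t) \<le> inverse (real (Suc N))"
    proof (intro always_eventually allI)
      fix N
      have "\<bar>of_int \<lfloor>real (Suc N) * t\<rfloor> - real (Suc N) * t\<bar> / real (Suc N) \<le> 1 / real (Suc N)"
        by (intro divide_right_mono) linarith+
      moreover have "of_int \<lfloor>real (Suc N) * t\<rfloor> / real (Suc N) - t =
          (of_int \<lfloor>real (Suc N) * t\<rfloor> - real (Suc N) * t) / real (Suc N)"
        by (simp add: field_simps del: of_nat_Suc)
      ultimately show "norm (of_int \<lfloor>real (Suc N) * t\<rfloor> / real (Suc N) - t) \<le> inverse (real (Suc N))"
        by (simp add: abs_divide inverse_eq_divide del: of_nat_Suc)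
    qed
  qed (rule LIMSEQ_inverse_real_of_nat)
  then show ?thesis
    by (simp add: LIM_zero_iff)
qed

lemma integral_class_approx:
  fixes x :: "real \<times> (real^'n) \<times> real"
  obtains e where "\<And>N. integral_class (e N)"
    and "(\<lambda>N. inverse (real (Suc N)) *\<^sub>R e N) \<longlonglongrightarrow> x"
proof -
  obtain r c m where x: "x = (r, c, m)"
    by (cases x) auto
  define e :: "nat \<Rightarrow> real \<times> (real^'n) \<times> real"
    where "e N = (of_int \<lfloor>real (Suc N) * r\<rfloor>, \<chi> i. of_int \<lfloor>real (Suc N) * c$i\<rfloor>,
      of_int \<lfloor>real (Suc N) * m\<rfloor>)" for N :: nat
  have "integral_class (e N)" for N
    unfolding e_def integral_class_def by simp
  moreover have "(\<lambda>N. inverse (real (Suc N)) *\<^sub>R e N) \<longlonglongrightarrow> x"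
  proof -
    have "(\<lambda>N. (of_int \<lfloor>real (Suc N) * r\<rfloor> / real (Suc N),
             \<chi> i. of_int \<lfloor>real (Suc N) * c$i\<rfloor> / real (Suc N),
             of_int \<lfloor>real (Suc N) * m\<rfloor> / real (Suc N))) \<longlonglongrightarrow> (r, \<chi> i. c$i, m)"
      by (intro tendsto_Pair tendsto_vec_lambda tendsto_floor_mult_divide)
    then show ?thesis
      by (simp add: x e_def scaleR_vec_def divide_inverse_commute del: of_nat_Suc)
  qed
  ultimately show ?thesis
    using that by blast
qed

lemma integral_perp_approx:
  assumes "integral_class s" and "mukai_pair Q s s = -2" and "mukai_pair Q z s = 0"
  obtains W c where "\<And>N. integral_class (W N)" and "\<And>N. mukai_pair Q (W N) s = 0"
    and "\<And>N. c N > 0" and "(\<lambda>N. c N *\<^sub>R W N) \<longlonglongrightarrow> z"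
proof -
  obtain e where e: "\<And>N. integral_class (e N)"
    and e_lim: "(\<lambda>N. inverse (real (Suc N)) *\<^sub>R e N) \<longlonglongrightarrow> z"
    using integral_class_approx by blast
  \<comment> \<open>x + (x,s)/2 s is the orthogonal projection onto s-perp; 2 e + (e,s) s is integral\<close>
  define W where "W N = 2 *\<^sub>R e N + mukai_pair Q (e N) s *\<^sub>R s" for N
  define c where "c N = inverse (real (Suc N)) / 2" for N
  have "integral_class (W N)" for N
    unfolding W_def
    by (intro integral_class_add integral_class_scaleR mukai_pair_in_Ints e assms(1)) auto
  moreover have "mukai_pair Q (W N) s = 0" for N
    unfolding W_def using assms(2) by (simp add: mukai_pair_bilinear)
  moreover have "c N > 0" for N
    unfolding c_def by simp
  moreover have "(\<lambda>N. c N *\<^sub>R W N) \<longlonglongrightarrow> z"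
  proof -
    let ?y = "\<lambda>N. inverse (real (Suc N)) *\<^sub>R e N"
    have "(\<lambda>N. ?y N + (mukai_pair Q (?y N) s / 2) *\<^sub>R s) \<longlonglongrightarrow> z + (mukai_pair Q z s / 2) *\<^sub>R s"
      by (intro tendsto_intros e_lim) simp
    moreover have "(\<lambda>N. ?y N + (mukai_pair Q (?y N) s / 2) *\<^sub>R s) = (\<lambda>N. c N *\<^sub>R W N)"
      by (simp add: c_def W_def mukai_pair_bilinear algebra_simps)
    ultimately show ?thesis
      using assms(3) by simp
  qed
  ultimately show ?thesis
    using that by blast
qed

lemma exists_anisotropic_orthogonal:
  fixes Q :: "int^'n^'n" and s w :: "real \<times> (real^'n) \<times> real"
  assumes H: "hyperbolic_even_lattice Q"
    and s: "mukai_pair Q s s \<noteq> 0" and w: "mukai_pair Q w w \<noteq> 0"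
    and ws: "mukai_pair Q w s = 0"
  obtains z where "mukai_pair Q z s = 0" and "mukai_pair Q z w = 0" and "mukai_pair Q z z \<noteq> 0"
proof -
  have commute: "mukai_pair Q x y = mukai_pair Q y x" for x y
    using H by (simp add: mukai_pair_commute hyperbolic_even_lattice_symmetric)
  have "\<exists>z. mukai_pair Q z s = 0 \<and> mukai_pair Q z w = 0 \<and> mukai_pair Q z z \<noteq> 0"
  proof (rule ccontr)
    assume "\<not> ?thesis"
    then have isotropic: "mukai_pair Q z z = 0"
      if "mukai_pair Q z s = 0" "mukai_pair Q z w = 0" for z
      using that by blast
    define P where "P z = z - (mukai_pair Q z s / mukai_pair Q s s) *\<^sub>R s
        - (mukai_pair Q z w / mukai_pair Q w w) *\<^sub>R w" for z
    have P_s: "mukai_pair Q (P z) s = 0" for z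
      unfolding P_def using s ws by (simp add: mukai_pair_bilinear)
    have P_w: "mukai_pair Q (P z) w = 0" for z
      unfolding P_def using w ws commute[of s w] by (simp add: mukai_pair_bilinear)
    have P_add: "P (z + z') = P z + P z'" for z z'
      unfolding P_def by (simp add: mukai_pair_bilinear algebra_simps add_divide_distrib)
    \<comment> \<open>polarisation: a totally isotropic subspace is totally orthogonal\<close>
    have P_orthogonal: "mukai_pair Q (P z) (P z') = 0" for z z'
    proof -
      have "mukai_pair Q (P z + P z') (P z + P z') = 0"
        using isotropic P_s P_w P_add by metis
      then show ?thesis
        using isotropic[OF P_s P_w] commute[of "P z'" "P z"] by (simp add: mukai_pair_bilinear)
    qed
    have P_zero: "P z = 0" for z
    proof (rule mukai_pair_nondegenerate[OF H])
      fix y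
      have "y = P y + (mukai_pair Q y s / mukai_pair Q s s) *\<^sub>R s
          + (mukai_pair Q y w / mukai_pair Q w w) *\<^sub>R w"
        unfolding P_def by simp
      then have "mukai_pair Q (P z) y = mukai_pair Q (P z) (P y + (mukai_pair Q y s / mukai_pair Q s s) *\<^sub>R s
          + (mukai_pair Q y w / mukai_pair Q w w) *\<^sub>R w)"
        by simp
      also have "\<dots> = 0"
        using P_orthogonal P_s P_w commute by (simp add: mukai_pair_bilinear)
      finally show "mukai_pair Q (P z) y = 0" .
    qed
    have "z \<in> span {s, w}" for z
    proof -
      have "z = (mukai_pair Q z s / mukai_pair Q s s) *\<^sub>R s + (mukai_pair Q z w / mukai_pair Q w w) *\<^sub>R w"
        using P_zero[of z] unfolding P_def by (simp add: algebra_simps)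
      also have "\<dots> \<in> span {s, w}"
        by (intro span_add span_scale span_base) auto
      finally show ?thesis .
    qed
    then have "dim (UNIV :: (real \<times> (real^'n) \<times> real) set) \<le> card {s, w}"
      by (intro dim_le_card) auto
    also have "\<dots> \<le> 2"
      by (simp add: card_insert_le_m1)
    finally show False
      by simp
  qed
  then show ?thesis
    using that by blast
qed

lemma exists_integral_perp_gram_nonzero:
  fixes Q :: "int^'n^'n" and s w :: "real \<times> (real^'n) \<times> real"
  assumes H: "hyperbolic_even_lattice Q"
    and "integral_class s" and ss: "mukai_pair Q s s = -2"
    and ws: "mukai_pair Q w s = 0" and w: "mukai_pair Q w w \<noteq> 0"
  obtains u where "integral_class u" and "mukai_pair Q u s = 0"
    and "mukai_pair Q w w * mukai_pair Q u u \<noteq> (mukai_pair Q w u)^2"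
proof -
  define gram where "gram x = mukai_pair Q w w * mukai_pair Q x x - (mukai_pair Q w x)^2" for x
  obtain z where zs: "mukai_pair Q z s = 0" and zw: "mukai_pair Q z w = 0"
    and zz: "mukai_pair Q z z \<noteq> 0"
    by (rule exists_anisotropic_orthogonal[OF H _ w ws]) (use ss in simp)
  obtain W c where W: "\<And>N. integral_class (W N)" "\<And>N. mukai_pair Q (W N) s = 0"
    and "\<And>N. c N > 0" and lim: "(\<lambda>N. c N *\<^sub>R W N) \<longlonglongrightarrow> z"
    using integral_perp_approx[OF assms(2) ss zs] by metis
  have "mukai_pair Q w z = 0"
    using zw H by (simp add: mukai_pair_commute hyperbolic_even_lattice_symmetric)
  then have "gram z \<noteq> 0"
    using zz w by (simp add: gram_def)
  moreover have "(\<lambda>N. gram (c N *\<^sub>R W N)) \<longlonglongrightarrow> gram z"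
    unfolding gram_def
    by (intro tendsto_diff tendsto_mult tendsto_const tendsto_power tendsto_mukai_pair lim)
  ultimately have "\<forall>\<^sub>F N in sequentially. gram (c N *\<^sub>R W N) \<noteq> 0"
    by (intro tendsto_imp_eventually_ne)
  then obtain N where "gram (c N *\<^sub>R W N) \<noteq> 0"
    by (auto simp: eventually_sequentially)
  moreover have "gram (c N *\<^sub>R W N) = (c N)^2 * gram (W N)"
    by (simp add: gram_def mukai_pair_bilinear power2_eq_square algebra_simps)
  ultimately have "gram (W N) \<noteq> 0"
    by auto
  then show ?thesis
    unfolding gram_def by (intro that[OF W]) simp
qed

lemma power2_diff_eq_imp_le_abs:
  fixes X Z D :: int
  assumes "X^2 - Z^2 = D" and "D \<noteq> 0" and "Z \<ge> 0"
  shows "Z \<le> \<bar>D\<bar>"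
proof -
  have "D = (\<bar>X\<bar> - Z) * (\<bar>X\<bar> + Z)"
    using assms(1) by (simp add: power2_eq_square algebra_simps flip: power2_abs)
  then have "\<bar>X\<bar> - Z \<noteq> 0" and "\<bar>D\<bar> = \<bar>\<bar>X\<bar> - Z\<bar> * (\<bar>X\<bar> + Z)"
    using assms(2,3) by (auto simp: abs_mult)
  moreover from \<open>\<bar>X\<bar> - Z \<noteq> 0\<close> have "1 \<le> \<bar>\<bar>X\<bar> - Z\<bar>"
    by linarith
  ultimately have "\<bar>X\<bar> + Z \<le> \<bar>D\<bar>"
    using mult_right_mono[of 1 "\<bar>\<bar>X\<bar> - Z\<bar>" "\<bar>X\<bar> + Z"] assms(3) by simp
  then show ?thesis
    by linarith
qed

lemma eventually_pos_not_double_square: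
  fixes a b c k :: int
  assumes k: "2 * a = k^2" and gram: "a * c \<noteq> b^2" and a: "a > 0"
  shows "\<forall>\<^sub>F M in sequentially. 0 < a * int M^2 + 2 * b * int M + c
    \<and> \<not> (\<exists>j. 2 * (a * int M^2 + 2 * b * int M + c) = j^2)"
proof -
  define D where "D = 4 * (a * c - b^2)"
  show ?thesis
    using eventually_ge_at_top[of "nat (\<bar>D\<bar> + 2 * \<bar>b\<bar> + 1)"]
  proof (rule eventually_mono)
    fix M :: nat
    assume M: "nat (\<bar>D\<bar> + 2 * \<bar>b\<bar> + 1) \<le> M"
    define q where "q = a * int M^2 + 2 * b * int M + c"
    define Z where "Z = 2 * a * int M + 2 * b"
    have "a * int M \<ge> int M"
      using a by (simp add: mult_right_mono[of 1 a "int M", simplified])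
    then have Z: "Z > \<bar>D\<bar>" "Z \<ge> 1"
      using M unfolding Z_def by linarith+
    have complete_square: "4 * a * q = Z^2 + D"
      by (simp add: q_def Z_def D_def power2_eq_square algebra_simps)
    have "Z^2 \<ge> Z"
      using Z by (simp add: power2_eq_square)
    then have "4 * a * q > 0"
      using complete_square Z by linarith
    then have "q > 0"
      using a by (simp add: zero_less_mult_iff)
    moreover have "\<not> (\<exists>j. 2 * q = j^2)"
    proof
      assume "\<exists>j. 2 * q = j^2"
      then obtain j where j: "2 * q = j^2" ..
      have "(k * j)^2 = 2 * a * (2 * q)"
        using k j by (simp add: power_mult_distrib)
      then have "(k * j)^2 - Z^2 = D"
        using complete_square by simp
      then have "Z \<le> \<bar>D\<bar>"
        by (rule power2_diff_eq_imp_le_abs) (use gram Z in \<open>auto simp: D_def\<close>)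
      then show False
        using Z by simp
    qed
    ultimately show "0 < a * int M^2 + 2 * b * int M + c
        \<and> \<not> (\<exists>j. 2 * (a * int M^2 + 2 * b * int M + c) = j^2)"
      unfolding q_def by blast
  qed
qed

definition integral_rays ::
  "int^'n^'n \<Rightarrow> real \<times> (real^'n) \<times> real \<Rightarrow> (real \<times> (real^'n) \<times> real) set" where
  "integral_rays Q s = {t *\<^sub>R v | t v. t > 0 \<and> integral_class v \<and> v \<in> s_perp_plus Q s}"

definition nonsquare_rays ::
  "int^'n^'n \<Rightarrow> real \<times> (real^'n) \<times> real \<Rightarrow> (real \<times> (real^'n) \<times> real) set" where
  "nonsquare_rays Q s = {t *\<^sub>R v | t v. t > 0 \<and> integral_class v \<and> v \<in> s_perp_plus Q s \<and>
     \<not> (\<exists>k::int. 2 * mukai_pair Q v v = of_int (k^2))}"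

lemma s_perp_plus_subset_closure_integral_rays:
  assumes "integral_class s" and "mukai_pair Q s s = -2"
  shows "s_perp_plus Q s \<subseteq> closure (integral_rays Q s)"
proof
  fix v
  assume "v \<in> s_perp_plus Q s"
  then have vs: "mukai_pair Q v s = 0" and v: "mukai_pair Q v v > 0"
    by (auto simp: s_perp_plus_def)
  obtain W c where W: "\<And>N. integral_class (W N)" "\<And>N. mukai_pair Q (W N) s = 0"
    and c: "\<And>N. c N > 0" and lim: "(\<lambda>N. c N *\<^sub>R W N) \<longlonglongrightarrow> v"
    using integral_perp_approx[OF assms vs] by metis
  have "\<forall>\<^sub>F N in sequentially. mukai_pair Q (c N *\<^sub>R W N) (c N *\<^sub>R W N) > 0"
    using tendsto_mukai_pair[OF lim lim] v by (rule order_tendstoD)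
  then have "\<forall>\<^sub>F N in sequentially. c N *\<^sub>R W N \<in> closure (integral_rays Q s)"
  proof (rule eventually_mono)
    fix N
    assume "mukai_pair Q (c N *\<^sub>R W N) (c N *\<^sub>R W N) > 0"
    then have "(c N)^2 * mukai_pair Q (W N) (W N) > 0"
      by (simp add: mukai_pair_bilinear power2_eq_square mult.assoc)
    then have "mukai_pair Q (W N) (W N) > 0"
      by (simp add: zero_less_mult_iff)
    then have "c N *\<^sub>R W N \<in> integral_rays Q s"
      unfolding integral_rays_def s_perp_plus_def using c W by blast
    then show "c N *\<^sub>R W N \<in> closure (integral_rays Q s)"
      using closure_subset by blast
  qed
  then show "v \<in> closure (integral_rays Q s)"
    by (rule Lim_in_closed_set[OF closed_closure _ sequentially_bot lim])
qed

lemma integral_rays_subset_closure_nonsquare_rays: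
  fixes Q :: "int^'n^'n" and s :: "real \<times> (real^'n) \<times> real"
  assumes H: "hyperbolic_even_lattice Q"
    and si: "integral_class s" and ss: "mukai_pair Q s s = -2"
  shows "integral_rays Q s \<subseteq> closure (nonsquare_rays Q s)"
proof
  fix y
  assume "y \<in> integral_rays Q s"
  then obtain t w where y: "y = t *\<^sub>R w" and t: "t > 0" and wi: "integral_class w"
    and ws: "mukai_pair Q w s = 0" and w: "mukai_pair Q w w > 0"
    by (auto simp: integral_rays_def s_perp_plus_def)
  show "y \<in> closure (nonsquare_rays Q s)"
  proof (cases "\<exists>k::int. 2 * mukai_pair Q w w = of_int (k^2)")
    case False
    then have "y \<in> nonsquare_rays Q s"
      unfolding nonsquare_rays_def s_perp_plus_def using y t wi ws w by blast
    then show ?thesis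
      using closure_subset by blast
  next
    case True
    then obtain k :: int where k: "2 * mukai_pair Q w w = of_int (k^2)" ..
    obtain u where ui: "integral_class u" and us: "mukai_pair Q u s = 0"
      and gram: "mukai_pair Q w w * mukai_pair Q u u \<noteq> (mukai_pair Q w u)^2"
      using exists_integral_perp_gram_nonzero[OF H si ss ws] w by (metis less_irrefl)
    obtain a where a: "mukai_pair Q w w = of_int a"
      using mukai_pair_in_Ints[OF wi wi] by (auto elim: Ints_cases)
    obtain b where b: "mukai_pair Q w u = of_int b"
      using mukai_pair_in_Ints[OF wi ui] by (auto elim: Ints_cases)
    obtain c where c: "mukai_pair Q u u = of_int c"
      using mukai_pair_in_Ints[OF ui ui] by (auto elim: Ints_cases)
    have "2 * a = k^2" and "a * c \<noteq> b^2" and "a > 0"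
      using k gram w by (simp_all add: a b c flip: of_int_mult of_int_power of_int_eq_iff)
    define x where "x M = real M *\<^sub>R w + u" for M :: nat
    have x_square: "mukai_pair Q (x M) (x M) = of_int (a * int M^2 + 2 * b * int M + c)" for M
      using H a b c
      by (simp add: x_def mukai_pair_bilinear mukai_pair_commute[of Q u w]
          hyperbolic_even_lattice_symmetric power2_eq_square algebra_simps)
    have "\<forall>\<^sub>F M in sequentially. t *\<^sub>R w + (t / real M) *\<^sub>R u \<in> closure (nonsquare_rays Q s)"
      using eventually_pos_not_double_square[OF \<open>2 * a = k^2\<close> \<open>a * c \<noteq> b^2\<close> \<open>a > 0\<close>]
        eventually_gt_at_top[of 0]
    proof eventually_elim
      case (elim M)
      have "integral_class (x M)"
        unfolding x_def by (intro integral_class_add integral_class_scaleR wi ui) auto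
      moreover have "mukai_pair Q (x M) s = 0"
        using ws us by (simp add: x_def mukai_pair_bilinear)
      moreover have "mukai_pair Q (x M) (x M) > 0"
        using elim by (simp only: x_square of_int_0_less_iff)
      moreover have "\<not> (\<exists>j::int. 2 * mukai_pair Q (x M) (x M) = of_int (j^2))"
      proof
        assume "\<exists>j::int. 2 * mukai_pair Q (x M) (x M) = of_int (j^2)"
        then obtain j :: int
          where "real_of_int (2 * (a * int M^2 + 2 * b * int M + c)) = of_int (j^2)"
          unfolding x_square by auto
        then show False
          using elim by (simp only: of_int_eq_iff) blast
      qed
      moreover have "t / real M > 0"
        using t elim by simp
      ultimately have "(t / real M) *\<^sub>R x M \<in> nonsquare_rays Q s"
        unfolding nonsquare_rays_def s_perp_plus_def by blast
      moreover have "t *\<^sub>R w + (t / real M) *\<^sub>R u = (t / real M) *\<^sub>R x M"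
        using elim by (simp add: x_def algebra_simps)
      ultimately show ?case
        using closure_subset by auto
    qed
    moreover have "(\<lambda>M. t *\<^sub>R w + (t / real M) *\<^sub>R u) \<longlonglongrightarrow> y"
      using tendsto_add[OF tendsto_const tendsto_scaleR[OF tendsto_mult[OF tendsto_const lim_1_over_n]
        tendsto_const], of "t *\<^sub>R w" t u]
      by (simp add: y)
    ultimately show ?thesis
      by (rule Lim_in_closed_set[OF closed_closure _ sequentially_bot])
  qed
qed

theorem lemmaA3:
  fixes Q :: "int^'n^'n" and s :: "real \<times> (real^'n) \<times> real"
  assumes "hyperbolic_even_lattice Q"
    and "CARD('n) \<le> 20"
    and "integral_class s"
    and "mukai_pair Q s s = -2"
  shows "s_perp_plus Q s \<subseteq>
    closure {t *\<^sub>R v | t v. t > 0 \<and> integral_class v \<and> v \<in> s_perp_plus Q s \<and>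
                 \<not> (\<exists>k::int. 2 * mukai_pair Q v v = of_int (k^2))}"
proof -
  have "s_perp_plus Q s \<subseteq> closure (integral_rays Q s)"
    using assms(3,4) by (rule s_perp_plus_subset_closure_integral_rays)
  also have "\<dots> \<subseteq> closure (nonsquare_rays Q s)"
    using integral_rays_subset_closure_nonsquare_rays[OF assms(1,3,4)]
    by (intro closure_minimal closed_closure)
  finally show ?thesis
    unfolding nonsquare_rays_def .
qed

end
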